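(* Consider the factorized (COM) cost model described in the context. There is no function $\rho$ that assigns a real number to every finite non-empty sequence of parameter triples $(m, fo, c)$ with the following property: for every instance and for all sequences $A, U, V, B$ of non-root nodes, with $U$ and $V$ non-empty, such that both concatenations $AUVB$ and $AVUB$ are valid join orders, $$\mathrm{Cost}(AUVB) \le \mathrm{Cost}(AVUB) \iff \rho(\mathrm{par}(U)) \le \rho(\mathrm{par}(V)).$$ Here $\mathrm{par}(W)$ denotes the sequence of triples $(m_i, fo_i, c_i)$ of the nodes $i$ of $W$, in order. In other words, this cost function does not satisfy the adjacent sequence interchange (ASI) property.
   Context: **Instance.** An instance consists of the following data. - A rooted tree $\mathcal{J}$ whose root $r$ is the driver relation and whose non-root nodes are join operators. - A number $N>0$, the driver cardinality. - For each non-root node $i$: a match probability $m_i\in[0,1]$, a fanout $fo_i\ge 1$ (a real number), and a per-probe cost $c_i>0$. By convention $m_r=1$. **Valid join orders.** A valid join order is a sequence listing every non-root node exactly once, such that each node whose parent is not $r$ appears after its parent. **Survival probability.** Let $T$ be a connected set of nodes with top node $v$ (that is, $T$ contains $v$ and, for each of its members other than $v$, also that member's parent). Define recursively $$m_T = m_v\Big(1-\big(1-\prod_{u} m_{T_u}\big)^{fo_v}\Big).$$ The product ranges over the children $u$ of $v$ that lie in $T$, and $T_u$ is the set of nodes of $T$ in the subtree rooted at $u$. An empty product equals $1$, so a single node $v$ has $m_{\{v\}} = m_v$. **Number of probes.** Suppose node $l$ is placed when the set of already placed nodes is $S$, where $S$ contains $r$ and all non-root nodes placed earlier. Let $r=a_0,a_1,\dots,a_k$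 be the proper ancestors of $l$, listed from the root down to the parent of $l$. For a node $u\in S$, let $T(u,S)$ be the set of nodes of $S$ in the subtree rooted at $u$. The expected number of probes into $l$ is $$\mathrm{probes}(l,S)=N\prod_{j=1}^{k} m_{a_j}fo_{a_j}\;\times\;\prod_{j=0}^{k}\;\prod_{u} m_{T(u,S)}.$$ Here the inner product ranges over the children $u$ of $a_j$ with $u\in S$ and $u\notin\{a_{j+1},l\}$. In particular, the first operator placed receives $N$ probes. **Cost of an order.** The cost of a valid order $\sigma$ is $\mathrm{Cost}(\sigma)=\sum_l c_l\,\mathrm{probes}(l,S_l)$, where $S_l$ is the set consisting of $r$ and the nodes preceding $l$ in $\sigma$. *)

theory Defs
  imports Complex_Main
begin

text \<open>Join trees. Nodes are natural numbers; V is the finite node set, r the root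
  (driver relation), par the parent function (par r is irrelevant).\<close>

definition is_tree :: "nat set \<Rightarrow> nat \<Rightarrow> (nat \<Rightarrow> nat) \<Rightarrow> bool" where
  "is_tree V r par \<longleftrightarrow> finite V \<and> r \<in> V \<and>
     (\<forall>v\<in>V. v \<noteq> r \<longrightarrow> par v \<in> V) \<and>
     (\<forall>v\<in>V. \<exists>k. (par ^^ k) v = r)"

definition is_instance ::
  "nat set \<Rightarrow> nat \<Rightarrow> (nat \<Rightarrow> nat) \<Rightarrow> real \<Rightarrow> (nat \<Rightarrow> real) \<Rightarrow> (nat \<Rightarrow> real) \<Rightarrow> (nat \<Rightarrow> real) \<Rightarrow> bool" where
  "is_instance V r par N m fo c \<longleftrightarrow> is_tree V r par \<and> N > 0 \<and> m r = 1 \<and>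
     (\<forall>i\<in>V. i \<noteq> r \<longrightarrow> 0 \<le> m i \<and> m i \<le> 1 \<and> 1 \<le> fo i \<and> 0 < c i)"

definition valid_order :: "nat set \<Rightarrow> nat \<Rightarrow> (nat \<Rightarrow> nat) \<Rightarrow> nat list \<Rightarrow> bool" where
  "valid_order V r par \<sigma> \<longleftrightarrow> distinct \<sigma> \<and> set \<sigma> = V - {r} \<and>
     (\<forall>i < length \<sigma>. par (\<sigma> ! i) \<noteq> r \<longrightarrow> par (\<sigma> ! i) \<in> set (take i \<sigma>))"

definition depth :: "nat \<Rightarrow> (nat \<Rightarrow> nat) \<Rightarrow> nat \<Rightarrow> nat" where
  "depth r par v = (LEAST k. (par ^^ k) v = r)"

text \<open>Proper ancestors a_0 = r, ..., a_k = parent of l.\<close>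

definition proper_ancestors :: "nat \<Rightarrow> (nat \<Rightarrow> nat) \<Rightarrow> nat \<Rightarrow> nat set" where
  "proper_ancestors r par l = {(par ^^ j) l | j. 0 < j \<and> j \<le> depth r par l}"

definition children_in :: "nat \<Rightarrow> (nat \<Rightarrow> nat) \<Rightarrow> nat set \<Rightarrow> nat \<Rightarrow> nat set" where
  "children_in r par T v = {u \<in> T. u \<noteq> r \<and> par u = v}"

text \<open>Survival probability m_T of the connected set T_v (nodes of T in the subtree of v),
  computed by the recursion of the paper with an explicit recursion-depth bound
  (fuel); with fuel at least the height of the subtree the value is exact, and
  additional fuel does not change it.\<close>

primrec msurv_fuel ::
  "nat \<Rightarrow> nat \<Rightarrow> (nat \<Rightarrow> nat) \<Rightarrow> (nat \<Rightarrow> real) \<Rightarrow> (nat \<Rightarrow> real) \<Rightarrow> nat set \<Rightarrow> nat \<Rightarrow> real" where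
  "msurv_fuel 0 r par m fo T v = m v"
| "msurv_fuel (Suc n) r par m fo T v =
     m v * (1 - (1 - (\<Prod>u\<in>children_in r par T v. msurv_fuel n r par m fo T u)) powr fo v)"

definition msurv ::
  "nat set \<Rightarrow> nat \<Rightarrow> (nat \<Rightarrow> nat) \<Rightarrow> (nat \<Rightarrow> real) \<Rightarrow> (nat \<Rightarrow> real) \<Rightarrow> nat set \<Rightarrow> nat \<Rightarrow> real" where
  "msurv V r par m fo T v = msurv_fuel (card V) r par m fo T v"

text \<open>Expected number of probes into l when the placed set (including r) is S.
  The inner product ranges over the children u of a_j in S other than
  a_{j+1} and l, i.e. over children of a_j in S that are not l and not ancestors of l.\<close>

definition probes ::
  "nat set \<Rightarrow> nat \<Rightarrow> (nat \<Rightarrow> nat) \<Rightarrow> real \<Rightarrow> (nat \<Rightarrow> real) \<Rightarrow> (nat \<Rightarrow> real) \<Rightarrow> nat \<Rightarrow> nat set \<Rightarrow> real" where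
  "probes V r par N m fo l S =
     N * (\<Prod>a\<in>proper_ancestors r par l - {r}. m a * fo a) *
     (\<Prod>a\<in>proper_ancestors r par l.
        \<Prod>u\<in>{u \<in> children_in r par S a. u \<notin> proper_ancestors r par l \<and> u \<noteq> l}.
          msurv V r par m fo S u)"

definition cost ::
  "nat set \<Rightarrow> nat \<Rightarrow> (nat \<Rightarrow> nat) \<Rightarrow> real \<Rightarrow> (nat \<Rightarrow> real) \<Rightarrow> (nat \<Rightarrow> real) \<Rightarrow> (nat \<Rightarrow> real) \<Rightarrow> nat list \<Rightarrow> real" where
  "cost V r par N m fo c \<sigma> =
     (\<Sum>i < length \<sigma>. c (\<sigma> ! i) * probes V r par N m fo (\<sigma> ! i) (insert r (set (take i \<sigma>))))"

definition params :: "(nat \<Rightarrow> real) \<Rightarrow> (nat \<Rightarrow> real) \<Rightarrow> (nat \<Rightarrow> real) \<Rightarrow> nat list \<Rightarrow> (real \<times> real \<times> real) list" where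
  "params m fo c W = map (\<lambda>i. (m i, fo i, c i)) W"

end

theory Submission
  imports Defs
begin

text \<open>An ASI rank sees the exchanged blocks only through their parameters, so exchanging
  two adjacent nodes with identical parameters could never change the cost. But the number of
  probes into a node also depends on its position in the join tree. Take the root 0 with
  children 1 and 3, node 2 a child of 1, m 2 = m 3 = 0, fo 1 = 2 and all other parameters 1.
  Nodes 2 and 3 have equal parameters, yet Cost(1 2 3) = 1 + 2 + 0 = 3 (once 2 is placed, the
  subtree of 1 lets nothing through to 3) while Cost(1 3 2) = 1 + 1 + 0 = 2 (once 3 is placed,
  nothing reaches 2).\<close>

definition asi_rank :: "((real \<times> real \<times> real) list \<Rightarrow> real) \<Rightarrow> bool" where
  "asi_rank \<rho> \<longleftrightarrow>
     (\<forall>V r par N m fo c A U W B.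
       is_instance V r par N m fo c \<longrightarrow> U \<noteq> [] \<longrightarrow> W \<noteq> [] \<longrightarrow>
       valid_order V r par (A @ U @ W @ B) \<longrightarrow> valid_order V r par (A @ W @ U @ B) \<longrightarrow>
       (cost V r par N m fo c (A @ U @ W @ B) \<le> cost V r par N m fo c (A @ W @ U @ B)
        \<longleftrightarrow> \<rho> (params m fo c U) \<le> \<rho> (params m fo c W)))"

lemma asi_rank_swap_same_params:
  assumes "asi_rank \<rho>" "is_instance V r par N m fo c" "U \<noteq> []" "W \<noteq> []"
    and "valid_order V r par (A @ U @ W @ B)" "valid_order V r par (A @ W @ U @ B)"
    and "params m fo c U = params m fo c W"
  shows "cost V r par N m fo c (A @ U @ W @ B) = cost V r par N m fo c (A @ W @ U @ B)"
proof -
  have "cost V r par N m fo c (A @ U @ W @ B) \<le> cost V r par N m fo c (A @ W @ U @ B)"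
    using assms unfolding asi_rank_def by (metis order_refl)
  moreover have "cost V r par N m fo c (A @ W @ U @ B) \<le> cost V r par N m fo c (A @ U @ W @ B)"
    using assms unfolding asi_rank_def by (metis order_refl)
  ultimately show ?thesis by linarith
qed

lemma depth_eqI:
  assumes "(par ^^ k) v = r" and "\<And>j. j < k \<Longrightarrow> (par ^^ j) v \<noteq> r"
  shows "depth r par v = k"
  unfolding depth_def using assms by (intro Least_equality) (auto simp: not_less[symmetric])

lemma proper_ancestors_conv_image:
  "proper_ancestors r par l = (\<lambda>j. (par ^^ j) l) ` {0<..depth r par l}"
  by (auto simp: proper_ancestors_def)

lemma proper_ancestors_root_child:
  assumes "par l = r" "l \<noteq> r"
  shows "proper_ancestors r par l = {r}"
proof -
  have "depth r par l = 1"
    using assms by (intro depth_eqI) auto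
  moreover have "{0<..1::nat} = {1}"
    by auto
  ultimately show ?thesis
    using assms by (simp add: proper_ancestors_conv_image)
qed

lemma proper_ancestors_grandchild:
  assumes "par (par l) = r" "par l \<noteq> r" "l \<noteq> r"
  shows "proper_ancestors r par l = {par l, r}"
proof -
  have "depth r par l = 2"
    using assms by (intro depth_eqI) (auto simp: numeral_2_eq_2 less_Suc_eq)
  moreover have "{0<..2::nat} = {1, 2}"
    by auto
  ultimately show ?thesis
    using assms by (simp add: proper_ancestors_conv_image numeral_2_eq_2)
qed

lemma probes_root_child:
  assumes "par l = r" "l \<noteq> r"
  shows "probes V r par N m fo l S = N * (\<Prod>u\<in>children_in r par S r - {l}. msurv V r par m fo S u)"
proof -
  have "{u \<in> children_in r par S r. u \<notin> {r} \<and> u \<noteq> l} = children_in r par S r - {l}"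
    by (auto simp: children_in_def)
  then show ?thesis
    using assms by (simp add: probes_def proper_ancestors_root_child)
qed

lemma probes_grandchild:
  assumes "par (par l) = r" "par l \<noteq> r" "l \<noteq> r"
  shows "probes V r par N m fo l S =
    N * (m (par l) * fo (par l)) *
    ((\<Prod>u\<in>children_in r par S (par l) - {l}. msurv V r par m fo S u) *
     (\<Prod>u\<in>children_in r par S r - {par l}. msurv V r par m fo S u))"
proof -
  have "{u \<in> children_in r par S (par l). u \<notin> {par l, r} \<and> u \<noteq> l} = children_in r par S (par l) - {l}"
    using assms by (auto simp: children_in_def)
  moreover have "{u \<in> children_in r par S r. u \<notin> {par l, r} \<and> u \<noteq> l} = children_in r par S r - {par l}"
    using assms by (auto simp: children_in_def)
  ultimately show ?thesis
    using assms by (simp add: probes_def proper_ancestors_grandchild insert_Diff_if)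
qed

lemma msurv_fuel_eq_0:
  assumes "m v = 0"
  shows "msurv_fuel n r par m fo T v = 0"
  using assms by (cases n) simp_all

lemma msurv_fuel_childless:
  assumes "children_in r par T v = {}"
  shows "msurv_fuel n r par m fo T v = m v"
  using assms by (cases n) simp_all

lemma msurv_dead_child:
  assumes "finite V" "V \<noteq> {}"
    and "finite (children_in r par T v)" "u \<in> children_in r par T v" "m u = 0"
  shows "msurv V r par m fo T v = 0"
proof -
  obtain n where "card V = Suc n"
    using assms(1,2) by (metis card_gt_0_iff gr0_conv_Suc)
  moreover have "(\<Prod>w\<in>children_in r par T v. msurv_fuel n r par m fo T w) = 0"
    using assms(3-5) by (intro prod_zero bexI[of _ u] msurv_fuel_eq_0)
  ultimately show ?thesis
    by (simp add: msurv_def)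
qed

lemma cost_three:
  "cost V r par N m fo c [a, b, d] =
     c a * probes V r par N m fo a {r} + c b * probes V r par N m fo b {r, a} +
     c d * probes V r par N m fo d {r, a, b}"
  by (simp add: cost_def numeral_3_eq_3 lessThan_Suc insert_commute)

definition ex_parent :: "nat \<Rightarrow> nat" where
  "ex_parent v = (if v = 2 then 1 else 0)"

definition ex_match :: "nat \<Rightarrow> real" where
  "ex_match v = (if v = 2 \<or> v = 3 then 0 else 1)"

definition ex_fanout :: "nat \<Rightarrow> real" where
  "ex_fanout v = (if v = 1 then 2 else 1)"

lemma ex_is_instance: "is_instance {0, 1, 2, 3} 0 ex_parent 1 ex_match ex_fanout (\<lambda>_. 1)"
proof -
  have "(ex_parent ^^ 2) 2 = 0"
    by (simp add: ex_parent_def numeral_2_eq_2)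
  moreover have "(ex_parent ^^ 1) v = 0" if "v \<in> {0, 1, 3}" for v
    using that by (auto simp: ex_parent_def)
  ultimately have "\<forall>v\<in>{0, 1, 2, 3}. \<exists>k. (ex_parent ^^ k) v = 0"
    by blast
  then show ?thesis
    by (auto simp: is_instance_def is_tree_def ex_parent_def ex_match_def ex_fanout_def)
qed

lemma ex_valid_order_123: "valid_order {0, 1, 2, 3} 0 ex_parent [1, 2, 3]"
  by (auto simp: valid_order_def ex_parent_def less_Suc_eq numeral_eq_Suc)

lemma ex_valid_order_132: "valid_order {0, 1, 2, 3} 0 ex_parent [1, 3, 2]"
  by (auto simp: valid_order_def ex_parent_def less_Suc_eq numeral_eq_Suc)

abbreviation ex_probes :: "nat \<Rightarrow> nat set \<Rightarrow> real" where
  "ex_probes \<equiv> probes {0, 1, 2, 3} 0 ex_parent 1 ex_match ex_fanout"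

abbreviation ex_msurv :: "nat set \<Rightarrow> nat \<Rightarrow> real" where
  "ex_msurv \<equiv> msurv {0, 1, 2, 3} 0 ex_parent ex_match ex_fanout"

abbreviation ex_cost :: "nat list \<Rightarrow> real" where
  "ex_cost \<equiv> cost {0, 1, 2, 3} 0 ex_parent 1 ex_match ex_fanout (\<lambda>_. 1)"

lemma ex_children_in:
  "children_in 0 ex_parent T 0 = T - {0, 2}"
  "children_in 0 ex_parent T 1 = T \<inter> {2}"
  by (auto simp: children_in_def ex_parent_def)

lemma ex_probes_first: "ex_probes 1 {0} = 1"
  by (simp add: probes_root_child ex_parent_def ex_children_in)

lemma ex_cost_123: "ex_cost [1, 2, 3] = 3"
proof -
  have "ex_probes 2 {0, 1} = 2"
    by (simp add: probes_grandchild ex_parent_def ex_children_in ex_match_def ex_fanout_def del: One_nat_def)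
  moreover have "ex_msurv {0, 1, 2} 1 = 0"
    by (rule msurv_dead_child[where u = 2]) (simp_all add: ex_children_in ex_match_def del: One_nat_def)
  then have "ex_probes 3 {0, 1, 2} = 0"
    by (simp add: probes_root_child ex_parent_def ex_children_in insert_Diff_if del: One_nat_def)
  ultimately show ?thesis
    by (simp add: cost_three ex_probes_first del: One_nat_def)
qed

lemma ex_cost_132: "ex_cost [1, 3, 2] = 2"
proof -
  have "ex_msurv {0, 1} 1 = 1"
    by (simp add: msurv_def msurv_fuel_childless ex_children_in ex_match_def del: One_nat_def)
  then have "ex_probes 3 {0, 1} = 1"
    by (simp add: probes_root_child ex_parent_def ex_children_in insert_Diff_if del: One_nat_def)
  moreover have "ex_msurv {0, 1, 3} 3 = 0"
    by (simp add: msurv_def msurv_fuel_eq_0 ex_match_def)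
  then have "ex_probes 2 {0, 1, 3} = 0"
    by (simp add: probes_grandchild ex_parent_def ex_children_in insert_Diff_if del: One_nat_def)
  ultimately show ?thesis
    by (simp add: cost_three ex_probes_first del: One_nat_def)
qed

lemma no_asi_rank: "\<not> asi_rank \<rho>"
proof
  assume "asi_rank \<rho>"
  moreover have "params ex_match ex_fanout (\<lambda>_. 1) [2] = params ex_match ex_fanout (\<lambda>_. 1) [3]"
    by (simp add: params_def ex_match_def ex_fanout_def)
  ultimately have "ex_cost ([1] @ [2] @ [3] @ []) = ex_cost ([1] @ [3] @ [2] @ [])"
    using ex_is_instance ex_valid_order_123 ex_valid_order_132
    by (intro asi_rank_swap_same_params) simp_all
  then show False
    using ex_cost_123 ex_cost_132 by simp
qed

theorem theorem3p1:
  shows "\<not> (\<exists>\<rho> :: (real \<times> real \<times> real) list \<Rightarrow> real.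
     \<forall>V r par N m fo c A U W B.
       is_instance V r par N m fo c \<longrightarrow> U \<noteq> [] \<longrightarrow> W \<noteq> [] \<longrightarrow>
       valid_order V r par (A @ U @ W @ B) \<longrightarrow> valid_order V r par (A @ W @ U @ B) \<longrightarrow>
       (cost V r par N m fo c (A @ U @ W @ B) \<le> cost V r par N m fo c (A @ W @ U @ B)
        \<longleftrightarrow> \<rho> (params m fo c U) \<le> \<rho> (params m fo c W)))"
  using no_asi_rank unfolding asi_rank_def by blast

end
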